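(* Let $\Delta$ be a finite domain, $\mathcal{L}$ a first-order language, $\Omega$ the set of all possible worlds on $\Delta$ w.r.t. $\mathcal{L}$, $R$ a binary predicate of $\mathcal{L}$, $k\ge 1$ an integer, and $\Gamma$ a first-order sentence over $\mathcal{L}$. Let $f_1^R,\dots,f_k^R$ be new binary predicates not in $\mathcal{L}$, with weights $w(f_i^R)=\overline{w}(f_i^R)=1$, and let $\Omega_{\mathrm{ext}}$ be the set of all possible worlds on $\Delta$ w.r.t. $\mathcal{L}$ extended by $f_1^R,\dots,f_k^R$. Define $$\Phi=(|R|=k|\Delta|)\wedge\Big(\forall x,y: R(x,y)\Leftrightarrow\bigvee_{i=1}^k f_i^R(x,y)\Big)\wedge\bigwedge_{i=1}^k\big(\forall x\,\exists y: f_i^R(x,y)\big)\wedge\bigwedge_{i\ne j}\big(\forall x,y:\neg f_i^R(x,y)\vee\neg f_j^R(x,y)\big).$$ Then for all weight functions $w,\overline{w}$ on the predicates of $\mathcal{L}$, $$\mathrm{WFOMC}\big(\Gamma\wedge\forall x\,\exists_{=k}y:R(x,y),\,w,\overline{w},\Omega\big)=\frac{1}{(k!)^{|\Delta|}}\,\mathrm{WFOMC}(\Gamma\wedge\Phi,\,w,\overline{w},\Omega_{\mathrm{ext}}).$$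
   Context: A possible world on $\Delta$ is a set of ground atoms over the language's predicates and $\Delta$. $N(R,\omega)$ is the number of ground atoms of $R$ true in $\omega$. For a set $\Omega$ of possible worlds, $\mathrm{WFOMC}(\Gamma,w,\overline{w},\Omega)=\sum_{\omega\in\Omega,\,\omega\models\Gamma}\prod_{R} w(R)^{N(R,\omega)}\overline{w}(R)^{|\Delta|^{\mathrm{arity}(R)}-N(R,\omega)}$, the product ranging over the predicates of the language of $\Omega$. The cardinality constraint $|R|=c$ holds in $\omega$ iff $N(R,\omega)=c$. $\forall x\,\exists_{=k}y:R(x,y)$ holds iff every $x\in\Delta$ has exactly $k$ distinct $y\in\Delta$ with $R(x,y)$. *)

theory Defs
  imports Complex_Main
begin

datatype 'p fm =
    Atom 'p "nat list"
  | Eq nat nat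
  | Neg "'p fm"
  | Conj "'p fm" "'p fm"
  | Disj "'p fm" "'p fm"
  | Ex nat "'p fm"
  | All nat "'p fm"

fun freevars :: "'p fm \<Rightarrow> nat set" where
  "freevars (Atom P vs) = set vs"
| "freevars (Eq x y) = {x, y}"
| "freevars (Neg \<phi>) = freevars \<phi>"
| "freevars (Conj \<phi> \<psi>) = freevars \<phi> \<union> freevars \<psi>"
| "freevars (Disj \<phi> \<psi>) = freevars \<phi> \<union> freevars \<psi>"
| "freevars (Ex x \<phi>) = freevars \<phi> - {x}"
| "freevars (All x \<phi>) = freevars \<phi> - {x}"

fun wf_fm :: "'p set \<Rightarrow> ('p \<Rightarrow> nat) \<Rightarrow> 'p fm \<Rightarrow> bool" where
  "wf_fm L ar (Atom P vs) = (P \<in> L \<and> length vs = ar P)"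
| "wf_fm L ar (Eq x y) = True"
| "wf_fm L ar (Neg \<phi>) = wf_fm L ar \<phi>"
| "wf_fm L ar (Conj \<phi> \<psi>) = (wf_fm L ar \<phi> \<and> wf_fm L ar \<psi>)"
| "wf_fm L ar (Disj \<phi> \<psi>) = (wf_fm L ar \<phi> \<and> wf_fm L ar \<psi>)"
| "wf_fm L ar (Ex x \<phi>) = wf_fm L ar \<phi>"
| "wf_fm L ar (All x \<phi>) = wf_fm L ar \<phi>"

definition fo_sentence :: "'p set \<Rightarrow> ('p \<Rightarrow> nat) \<Rightarrow> 'p fm \<Rightarrow> bool" where
  "fo_sentence L ar \<phi> \<longleftrightarrow> wf_fm L ar \<phi> \<and> freevars \<phi> = {}"

type_synonym ('p, 'd) world = "('p \<times> 'd list) set"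

fun sat :: "'d set \<Rightarrow> ('p, 'd) world \<Rightarrow> (nat \<Rightarrow> 'd) \<Rightarrow> 'p fm \<Rightarrow> bool" where
  "sat D \<omega> \<nu> (Atom P vs) = ((P, map \<nu> vs) \<in> \<omega>)"
| "sat D \<omega> \<nu> (Eq x y) = (\<nu> x = \<nu> y)"
| "sat D \<omega> \<nu> (Neg \<phi>) = (\<not> sat D \<omega> \<nu> \<phi>)"
| "sat D \<omega> \<nu> (Conj \<phi> \<psi>) = (sat D \<omega> \<nu> \<phi> \<and> sat D \<omega> \<nu> \<psi>)"
| "sat D \<omega> \<nu> (Disj \<phi> \<psi>) = (sat D \<omega> \<nu> \<phi> \<or> sat D \<omega> \<nu> \<psi>)"
| "sat D \<omega> \<nu> (Ex x \<phi>) = (\<exists>d\<in>D. sat D \<omega> (\<nu>(x := d)) \<phi>)"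
| "sat D \<omega> \<nu> (All x \<phi>) = (\<forall>d\<in>D. sat D \<omega> (\<nu>(x := d)) \<phi>)"

text \<open>Truth of a sentence in a world (the valuation is irrelevant for sentences).\<close>
definition models :: "'d set \<Rightarrow> ('p, 'd) world \<Rightarrow> 'p fm \<Rightarrow> bool" where
  "models D \<omega> \<phi> \<longleftrightarrow> sat D \<omega> (\<lambda>_. undefined) \<phi>"

definition ground_atoms :: "'p set \<Rightarrow> ('p \<Rightarrow> nat) \<Rightarrow> 'd set \<Rightarrow> ('p \<times> 'd list) set" where
  "ground_atoms L ar D = {(P, xs). P \<in> L \<and> length xs = ar P \<and> set xs \<subseteq> D}"

definition worlds :: "'p set \<Rightarrow> ('p \<Rightarrow> nat) \<Rightarrow> 'd set \<Rightarrow> ('p, 'd) world set" where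
  "worlds L ar D = Pow (ground_atoms L ar D)"

definition N :: "'p \<Rightarrow> ('p, 'd) world \<Rightarrow> nat" where
  "N R \<omega> = card {xs. (R, xs) \<in> \<omega>}"

definition WFOMC :: "(('p, 'd) world \<Rightarrow> bool) \<Rightarrow> ('p \<Rightarrow> real) \<Rightarrow> ('p \<Rightarrow> real)
    \<Rightarrow> 'p set \<Rightarrow> ('p \<Rightarrow> nat) \<Rightarrow> 'd set \<Rightarrow> real" where
  "WFOMC \<Gamma> w wb L ar D =
     (\<Sum>\<omega>\<in>{\<omega> \<in> worlds L ar D. \<Gamma> \<omega>}.
        \<Prod>R\<in>L. w R ^ N R \<omega> * wb R ^ (card D ^ ar R - N R \<omega>))"

definition exactly_k :: "'p \<Rightarrow> nat \<Rightarrow> 'd set \<Rightarrow> ('p, 'd) world \<Rightarrow> bool" where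
  "exactly_k R k D \<omega> \<longleftrightarrow> (\<forall>x\<in>D. card {y\<in>D. (R, [x, y]) \<in> \<omega>} = k)"

definition Phi :: "'p \<Rightarrow> (nat \<Rightarrow> 'p) \<Rightarrow> nat \<Rightarrow> 'd set \<Rightarrow> ('p, 'd) world \<Rightarrow> bool" where
  "Phi R f k D \<omega> \<longleftrightarrow>
     N R \<omega> = k * card D \<and>
     (\<forall>x\<in>D. \<forall>y\<in>D. (R, [x, y]) \<in> \<omega> \<longleftrightarrow> (\<exists>i\<in>{1..k}. (f i, [x, y]) \<in> \<omega>)) \<and>
     (\<forall>i\<in>{1..k}. \<forall>x\<in>D. \<exists>y\<in>D. (f i, [x, y]) \<in> \<omega>) \<and>
     (\<forall>i\<in>{1..k}. \<forall>j\<in>{1..k}. i \<noteq> j \<longrightarrow>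
        (\<forall>x\<in>D. \<forall>y\<in>D. (f i, [x, y]) \<notin> \<omega> \<or> (f j, [x, y]) \<notin> \<omega>))"

end

theory Submission
  imports Defs "HOL-Combinatorics.Multiset_Permutations"
begin

text \<open>Forgetting the atoms of the new predicates maps the worlds satisfying \<open>\<Gamma> \<and> \<Phi>\<close> onto
  the worlds satisfying \<open>\<Gamma> \<and> \<forall>x \<exists>\<^sub>=\<^sub>k y: R(x,y)\<close>. Since \<open>\<Gamma>\<close> and all weights only see the
  original predicates, it suffices that every fibre has \<open>(k!)\<^bsup>|\<Delta>|\<^esup>\<close> elements. In a world of
  \<open>\<Phi>\<close> the sets \<open>{y. f\<^sub>i(x,y)}\<close> are nonempty, pairwise disjoint and cover the \<open>R\<close>-successors of
  \<open>x\<close>; as \<open>|R| = k|\<Delta>|\<close> each of them is a singleton, so \<open>f\<^sub>1,\<dots>,f\<^sub>k\<close> enumerate the \<open>k\<close>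
  successors of every \<open>x\<close> without repetition. Conversely every such enumeration extends the
  world, and there are \<open>k!\<close> of them for each \<open>x\<close>.\<close>

definition restrict_world :: "'p set \<Rightarrow> ('p, 'd) world \<Rightarrow> ('p, 'd) world" where
  "restrict_world L \<omega> = {a \<in> \<omega>. fst a \<in> L}"

lemma sat_restrict_world:
  "wf_fm L ar \<phi> \<Longrightarrow> sat D (restrict_world L \<omega>) \<nu> \<phi> = sat D \<omega> \<nu> \<phi>"
  by (induction \<phi> arbitrary: \<nu>) (auto simp: restrict_world_def)

lemma models_restrict_world:
  "fo_sentence L ar \<phi> \<Longrightarrow> models D (restrict_world L \<omega>) \<phi> = models D \<omega> \<phi>"
  unfolding models_def fo_sentence_def using sat_restrict_world by blast

lemma N_restrict_world: "P \<in> L \<Longrightarrow> N P (restrict_world L \<omega>) = N P \<omega>"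
  by (simp add: N_def restrict_world_def)

lemma worlds_memD:
  "\<omega> \<in> worlds L ar D \<Longrightarrow> (P, xs) \<in> \<omega> \<Longrightarrow> P \<in> L \<and> length xs = ar P \<and> set xs \<subseteq> D"
  by (auto simp: worlds_def ground_atoms_def)

lemma restrict_world_in_worlds:
  "\<omega> \<in> worlds L' ar D \<Longrightarrow> restrict_world L \<omega> \<in> worlds L ar D"
  by (auto simp: worlds_def ground_atoms_def restrict_world_def)

lemma finite_worlds:
  assumes "finite L" "finite D"
  shows "finite (worlds L ar D)"
proof -
  have "ground_atoms L ar D = (SIGMA P:L. {xs. set xs \<subseteq> D \<and> length xs = ar P})"
    by (auto simp: ground_atoms_def)
  then show ?thesis
    using assms by (simp add: worlds_def finite_lists_length_eq)
qed

definition world_weight ::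
    "('p \<Rightarrow> real) \<Rightarrow> ('p \<Rightarrow> real) \<Rightarrow> 'p set \<Rightarrow> ('p \<Rightarrow> nat) \<Rightarrow> 'd set \<Rightarrow> ('p, 'd) world \<Rightarrow> real"
  where "world_weight w wb L ar D \<omega> = (\<Prod>P\<in>L. w P ^ N P \<omega> * wb P ^ (card D ^ ar P - N P \<omega>))"

lemma WFOMC_eq_sum_world_weight:
  "WFOMC \<Gamma> w wb L ar D = (\<Sum>\<omega>\<in>{\<omega> \<in> worlds L ar D. \<Gamma> \<omega>}. world_weight w wb L ar D \<omega>)"
  by (simp add: WFOMC_def world_weight_def)

lemma world_weight_restrict_world:
  assumes "finite L" "finite F" "L \<inter> F = {}" "\<forall>P\<in>F. w P = 1 \<and> wb P = 1"
  shows "world_weight w wb (L \<union> F) ar D \<omega> = world_weight w wb L ar D (restrict_world L \<omega>)"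
proof -
  have "world_weight w wb (L \<union> F) ar D \<omega> = world_weight w wb L ar D \<omega>"
    using assms by (simp add: world_weight_def prod.union_disjoint)
  also have "\<dots> = world_weight w wb L ar D (restrict_world L \<omega>)"
    by (simp add: world_weight_def N_restrict_world)
  finally show ?thesis .
qed

lemma WFOMC_extension_uniform_fibres:
  assumes "finite D" "finite L" "finite F" "L \<inter> F = {}" "\<forall>P\<in>F. w P = 1 \<and> wb P = 1"
    and image: "\<And>\<omega>. \<omega> \<in> worlds (L \<union> F) ar D \<Longrightarrow> \<Gamma>' \<omega> \<Longrightarrow> \<Gamma> (restrict_world L \<omega>)"
    and fibre: "\<And>\<omega>\<^sub>0. \<omega>\<^sub>0 \<in> worlds L ar D \<Longrightarrow> \<Gamma> \<omega>\<^sub>0 \<Longrightarrow>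
      card {\<omega> \<in> worlds (L \<union> F) ar D. \<Gamma>' \<omega> \<and> restrict_world L \<omega> = \<omega>\<^sub>0} = c"
  shows "WFOMC \<Gamma>' w wb (L \<union> F) ar D = real c * WFOMC \<Gamma> w wb L ar D"
proof -
  let ?A = "{\<omega> \<in> worlds L ar D. \<Gamma> \<omega>}" and ?A' = "{\<omega> \<in> worlds (L \<union> F) ar D. \<Gamma>' \<omega>}"
  let ?wt = "world_weight w wb L ar D"
  have fin: "finite ?A" "finite ?A'"
    using assms(1-3) by (simp_all add: finite_worlds)
  have "restrict_world L ` ?A' \<subseteq> ?A"
    using image restrict_world_in_worlds by blast
  have "WFOMC \<Gamma>' w wb (L \<union> F) ar D = (\<Sum>\<omega>\<in>?A'. ?wt (restrict_world L \<omega>))"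
    using assms(2-5) by (simp add: WFOMC_eq_sum_world_weight world_weight_restrict_world)
  also have "\<dots> = (\<Sum>\<omega>\<^sub>0\<in>?A. \<Sum>\<omega>\<in>{\<omega> \<in> ?A'. restrict_world L \<omega> = \<omega>\<^sub>0}. ?wt (restrict_world L \<omega>))"
    by (rule sum.group[OF fin(2,1) \<open>restrict_world L ` ?A' \<subseteq> ?A\<close>, symmetric])
  also have "\<dots> = (\<Sum>\<omega>\<^sub>0\<in>?A. real c * ?wt \<omega>\<^sub>0)"
  proof (rule sum.cong[OF refl])
    fix \<omega>\<^sub>0 assume "\<omega>\<^sub>0 \<in> ?A"
    then have "card {\<omega> \<in> ?A'. restrict_world L \<omega> = \<omega>\<^sub>0} = c"
      using fibre by (simp add: conj_assoc)
    then show "(\<Sum>\<omega>\<in>{\<omega> \<in> ?A'. restrict_world L \<omega> = \<omega>\<^sub>0}. ?wt (restrict_world L \<omega>)) = real c * ?wt \<omega>\<^sub>0"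
      by simp
  qed
  also have "\<dots> = real c * WFOMC \<Gamma> w wb L ar D"
    by (simp add: WFOMC_eq_sum_world_weight sum_distrib_left)
  finally show ?thesis .
qed

lemma length_eq_2_iff: "length xs = 2 \<longleftrightarrow> (\<exists>x y. xs = [x, y])"
  by (auto simp: numeral_2_eq_2 length_Suc_conv)

definition successors :: "'p \<Rightarrow> 'd set \<Rightarrow> ('p, 'd) world \<Rightarrow> 'd \<Rightarrow> 'd set" where
  "successors P D \<omega> x = {y \<in> D. (P, [x, y]) \<in> \<omega>}"

lemma exactly_k_iff_card_successors:
  "exactly_k R k D \<omega> \<longleftrightarrow> (\<forall>x\<in>D. card (successors R D \<omega> x) = k)"
  by (simp add: exactly_k_def successors_def)

lemma successors_restrict_world:
  "P \<in> L \<Longrightarrow> successors P D (restrict_world L \<omega>) x = successors P D \<omega> x"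
  by (auto simp: successors_def restrict_world_def)

lemma exactly_k_restrict_world:
  "R \<in> L \<Longrightarrow> exactly_k R k D (restrict_world L \<omega>) = exactly_k R k D \<omega>"
  by (simp add: exactly_k_iff_card_successors successors_restrict_world)

lemma N_eq_sum_card_successors:
  assumes "finite D" "\<omega> \<in> worlds L ar D" "ar R = 2"
  shows "N R \<omega> = (\<Sum>x\<in>D. card (successors R D \<omega> x))"
proof -
  have "{xs. (R, xs) \<in> \<omega>} = (\<lambda>(x, y). [x, y]) ` (SIGMA x:D. successors R D \<omega> x)"
  proof (intro set_eqI iffI)
    fix xs assume "xs \<in> {xs. (R, xs) \<in> \<omega>}"
    moreover from this have "length xs = 2" "set xs \<subseteq> D"
      using worlds_memD[OF assms(2)] assms(3) by auto
    then obtain x y where "xs = [x, y]"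
      by (auto simp: length_eq_2_iff)
    ultimately show "xs \<in> (\<lambda>(x, y). [x, y]) ` (SIGMA x:D. successors R D \<omega> x)"
      using \<open>set xs \<subseteq> D\<close> by (auto simp: successors_def)
  qed (auto simp: successors_def)
  moreover have "inj_on (\<lambda>(x, y). [x, y]) (SIGMA x:D. successors R D \<omega> x)"
    by (auto intro: inj_onI)
  ultimately have "N R \<omega> = card (SIGMA x:D. successors R D \<omega> x)"
    by (simp add: N_def card_image)
  also have "\<dots> = (\<Sum>x\<in>D. card (successors R D \<omega> x))"
    using assms(1) by (intro card_SigmaI) (auto simp: successors_def)
  finally show ?thesis .
qed

lemma sum_eq_card_imp_eq_1:
  fixes g :: "'a \<Rightarrow> nat"
  assumes "finite A" "\<forall>a\<in>A. 1 \<le> g a" "sum g A = card A" "a \<in> A"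
  shows "g a = 1"
proof (rule ccontr)
  assume "g a \<noteq> 1"
  with assms have "(\<Sum>_\<in>A. 1) < sum g A"
    by (intro sum_strict_mono_ex1) force+
  with assms(3) show False
    by simp
qed

lemma Phi_successors_eq_UN:
  "Phi R f k D \<omega> \<Longrightarrow> x \<in> D \<Longrightarrow> successors R D \<omega> x = (\<Union>i\<in>{1..k}. successors (f i) D \<omega> x)"
  by (auto simp: Phi_def successors_def)

lemma Phi_card_successors_eq_sum:
  assumes "finite D" "Phi R f k D \<omega>" "x \<in> D"
  shows "card (successors R D \<omega> x) = (\<Sum>i\<in>{1..k}. card (successors (f i) D \<omega> x))"
proof -
  have "\<forall>i\<in>{1..k}. \<forall>j\<in>{1..k}. i \<noteq> j \<longrightarrow> successors (f i) D \<omega> x \<inter> successors (f j) D \<omega> x = {}"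
    using assms(2,3) by (auto simp: Phi_def successors_def)
  moreover have "\<forall>i\<in>{1..k}. finite (successors (f i) D \<omega> x)"
    using assms(1) by (simp add: successors_def)
  ultimately show ?thesis
    using assms(2,3) by (simp add: Phi_successors_eq_UN card_UN_disjoint)
qed

text \<open>Here the cardinality constraint \<open>|R| = k|\<Delta>|\<close> is used: the \<open>k|\<Delta>|\<close> nonempty label sets
  add up to \<open>|R|\<close>.\<close>

lemma Phi_card_label_successors:
  assumes "finite D" "ar R = 2" "\<omega> \<in> worlds L ar D" "Phi R f k D \<omega>" "x \<in> D" "i \<in> {1..k}"
  shows "card (successors (f i) D \<omega> x) = 1"
proof -
  let ?g = "\<lambda>(x, i). card (successors (f i) D \<omega> x)"
  have "successors (f i) D \<omega> x \<noteq> {}" if "x \<in> D" "i \<in> {1..k}" for x i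
    using assms(4) that unfolding Phi_def successors_def by blast
  then have "\<forall>p\<in>D \<times> {1..k}. 1 \<le> ?g p"
    using assms(1) by (auto simp: Suc_le_eq card_gt_0_iff successors_def)
  moreover have "sum ?g (D \<times> {1..k}) = (\<Sum>x\<in>D. card (successors R D \<omega> x))"
    using assms(1,4) by (simp add: sum.cartesian_product[symmetric] Phi_card_successors_eq_sum)
  moreover have "\<dots> = card (D \<times> {1..k})"
    using assms(4) N_eq_sum_card_successors[OF assms(1,3,2)] by (simp add: Phi_def card_cartesian_product)
  ultimately show ?thesis
    using sum_eq_card_imp_eq_1[of "D \<times> {1..k}" ?g "(x, i)"] assms(1,5,6) by simp
qed

lemma Phi_imp_exactly_k:
  assumes "finite D" "ar R = 2" "\<omega> \<in> worlds L ar D" "Phi R f k D \<omega>"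
  shows "exactly_k R k D \<omega>"
  using assms by (simp add: exactly_k_iff_card_successors Phi_card_successors_eq_sum
      Phi_card_label_successors)

lemma map_nth_pred_upt: "map (\<lambda>i. xs ! (i - 1)) [1..<Suc (length xs)] = xs"
  by (rule nth_equalityI) (simp_all del: upt_Suc)

lemma set_eq_image_nth_pred: "set xs = (\<lambda>i. xs ! (i - 1)) ` {1..length xs}"
proof -
  have "set xs = set (map (\<lambda>i. xs ! (i - 1)) [1..<Suc (length xs)])"
    by (simp only: map_nth_pred_upt)
  then show ?thesis
    by (simp only: set_map set_upt atLeastLessThanSuc_atLeastAtMost)
qed

lemma permutations_of_successorsD:
  assumes "exactly_k R k D \<omega>" "\<psi> \<in> (\<Pi>\<^sub>E x\<in>D. permutations_of_set (successors R D \<omega> x))" "x \<in> D"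
  shows "set (\<psi> x) = successors R D \<omega> x" "distinct (\<psi> x)" "length (\<psi> x) = k"
proof -
  have "\<psi> x \<in> permutations_of_set (successors R D \<omega> x)"
    using assms(2,3) by (rule PiE_mem)
  then show "set (\<psi> x) = successors R D \<omega> x" "distinct (\<psi> x)"
    by (simp_all add: permutations_of_set_def)
  then show "length (\<psi> x) = k"
    using assms(1,3) by (metis distinct_card exactly_k_iff_card_successors)
qed

lemma nth_permutations_of_successors:
  assumes "exactly_k R k D \<omega>" "\<psi> \<in> (\<Pi>\<^sub>E x\<in>D. permutations_of_set (successors R D \<omega> x))"
    "x \<in> D" "i \<in> {1..k}"
  shows "\<psi> x ! (i - 1) \<in> successors R D \<omega> x"
proof -
  note \<psi>x = permutations_of_successorsD[OF assms(1-3)]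
  have "\<psi> x ! (i - 1) \<in> set (\<psi> x)"
    using assms(4) \<psi>x(3) by (intro nth_mem) auto
  then show ?thesis
    using \<psi>x(1) by simp
qed

text \<open>The list \<open>\<psi> x\<close> enumerates the \<open>R\<close>-successors of \<open>x\<close>; \<open>f i (x, y)\<close> says that \<open>y\<close> is its
  \<open>i\<close>-th entry, at list index \<open>i - 1\<close>.\<close>

definition labelled_extension ::
    "(nat \<Rightarrow> 'p) \<Rightarrow> nat \<Rightarrow> 'd set \<Rightarrow> ('p, 'd) world \<Rightarrow> ('d \<Rightarrow> 'd list) \<Rightarrow> ('p, 'd) world"
  where "labelled_extension f k D \<omega>\<^sub>0 \<psi> =
    \<omega>\<^sub>0 \<union> {(f i, [x, \<psi> x ! (i - 1)]) | x i. x \<in> D \<and> i \<in> {1..k}}"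

definition labelling :: "(nat \<Rightarrow> 'p) \<Rightarrow> nat \<Rightarrow> 'd set \<Rightarrow> ('p, 'd) world \<Rightarrow> 'd \<Rightarrow> 'd list" where
  "labelling f k D \<omega> = (\<lambda>x\<in>D. map (\<lambda>i. the_elem (successors (f i) D \<omega> x)) [1..<Suc k])"

context
  fixes D :: "'d set" and L :: "'p set" and ar :: "'p \<Rightarrow> nat" and R :: 'p and k :: nat
    and f :: "nat \<Rightarrow> 'p"
  assumes finite_D: "finite D" and R_in_L: "R \<in> L" and ar_R: "ar R = 2"
    and inj_f: "inj_on f {1..k}" and f_fresh: "\<forall>i\<in>{1..k}. f i \<notin> L \<and> ar (f i) = 2"
begin

lemma label_atom_in_labelled_extension_iff:
  assumes "\<omega>\<^sub>0 \<in> worlds L ar D" "i \<in> {1..k}"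
  shows "(f i, [x, y]) \<in> labelled_extension f k D \<omega>\<^sub>0 \<psi> \<longleftrightarrow> x \<in> D \<and> y = \<psi> x ! (i - 1)"
proof -
  have "(f i, [x, y]) \<notin> \<omega>\<^sub>0"
    using worlds_memD[OF assms(1)] f_fresh assms(2) by blast
  moreover have "f i = f j \<longleftrightarrow> i = j" if "j \<in> {1..k}" for j
    using inj_f assms(2) that by (auto dest: inj_onD)
  ultimately show ?thesis
    using assms(2) by (auto simp: labelled_extension_def)
qed

lemma restrict_labelled_extension:
  "\<omega>\<^sub>0 \<in> worlds L ar D \<Longrightarrow> restrict_world L (labelled_extension f k D \<omega>\<^sub>0 \<psi>) = \<omega>\<^sub>0"
  using f_fresh by (auto simp: labelled_extension_def restrict_world_def dest: worlds_memD)

lemma R_atom_in_labelled_extension_iff: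
  assumes "\<omega>\<^sub>0 \<in> worlds L ar D"
  shows "(R, xs) \<in> labelled_extension f k D \<omega>\<^sub>0 \<psi> \<longleftrightarrow> (R, xs) \<in> \<omega>\<^sub>0"
proof -
  have "(R, xs) \<in> labelled_extension f k D \<omega>\<^sub>0 \<psi> \<longleftrightarrow>
      (R, xs) \<in> restrict_world L (labelled_extension f k D \<omega>\<^sub>0 \<psi>)"
    using R_in_L by (simp add: restrict_world_def)
  then show ?thesis
    by (simp add: restrict_labelled_extension[OF assms])
qed

lemma labelled_extension_in_worlds:
  assumes \<omega>\<^sub>0: "\<omega>\<^sub>0 \<in> worlds L ar D" "exactly_k R k D \<omega>\<^sub>0"
    and \<psi>: "\<psi> \<in> (\<Pi>\<^sub>E x\<in>D. permutations_of_set (successors R D \<omega>\<^sub>0 x))"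
  shows "labelled_extension f k D \<omega>\<^sub>0 \<psi> \<in> worlds (L \<union> f ` {1..k}) ar D"
proof -
  have "\<psi> x ! (i - 1) \<in> D" if "x \<in> D" "i \<in> {1..k}" for x i
    using nth_permutations_of_successors[OF \<omega>\<^sub>0(2) \<psi> that] by (simp add: successors_def)
  then show ?thesis
    using \<omega>\<^sub>0(1) f_fresh by (auto simp: labelled_extension_def worlds_def ground_atoms_def)
qed

lemma successors_labelled_extension:
  assumes \<omega>\<^sub>0: "\<omega>\<^sub>0 \<in> worlds L ar D" "exactly_k R k D \<omega>\<^sub>0"
    and \<psi>: "\<psi> \<in> (\<Pi>\<^sub>E x\<in>D. permutations_of_set (successors R D \<omega>\<^sub>0 x))"
    and "x \<in> D" "i \<in> {1..k}"
  shows "successors (f i) D (labelled_extension f k D \<omega>\<^sub>0 \<psi>) x = {\<psi> x ! (i - 1)}"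
proof -
  have "\<psi> x ! (i - 1) \<in> D"
    using nth_permutations_of_successors[OF \<omega>\<^sub>0(2) \<psi> assms(4,5)] by (simp add: successors_def)
  then show ?thesis
    using \<open>x \<in> D\<close> label_atom_in_labelled_extension_iff[OF \<omega>\<^sub>0(1) assms(5)]
    by (auto simp: successors_def)
qed

lemma labelled_extension_Phi:
  assumes \<omega>\<^sub>0: "\<omega>\<^sub>0 \<in> worlds L ar D" "exactly_k R k D \<omega>\<^sub>0"
    and \<psi>: "\<psi> \<in> (\<Pi>\<^sub>E x\<in>D. permutations_of_set (successors R D \<omega>\<^sub>0 x))"
  shows "Phi R f k D (labelled_extension f k D \<omega>\<^sub>0 \<psi>)"
proof -
  let ?\<omega> = "labelled_extension f k D \<omega>\<^sub>0 \<psi>"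
  note \<psi>x = permutations_of_successorsD[OF \<omega>\<^sub>0(2) \<psi>]
  have "N R ?\<omega> = N R \<omega>\<^sub>0"
    using R_atom_in_labelled_extension_iff[OF \<omega>\<^sub>0(1)] by (simp add: N_def)
  also have "\<dots> = k * card D"
    using \<omega>\<^sub>0 N_eq_sum_card_successors[OF finite_D \<omega>\<^sub>0(1) ar_R]
    by (simp add: exactly_k_iff_card_successors)
  finally have N_R: "N R ?\<omega> = k * card D" .
  have R_iff_label: "(R, [x, y]) \<in> ?\<omega> \<longleftrightarrow> (\<exists>i\<in>{1..k}. (f i, [x, y]) \<in> ?\<omega>)"
    if "x \<in> D" "y \<in> D" for x y
  proof -
    have "(R, [x, y]) \<in> ?\<omega> \<longleftrightarrow> y \<in> set (\<psi> x)"
      using that \<psi>x(1)[OF that(1)] R_atom_in_labelled_extension_iff[OF \<omega>\<^sub>0(1)]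
      by (simp add: successors_def)
    also have "\<dots> \<longleftrightarrow> (\<exists>i\<in>{1..k}. y = \<psi> x ! (i - 1))"
      using set_eq_image_nth_pred[of "\<psi> x"] \<psi>x(3)[OF that(1)] by auto
    also have "\<dots> \<longleftrightarrow> (\<exists>i\<in>{1..k}. (f i, [x, y]) \<in> ?\<omega>)"
      using that(1) by (simp add: label_atom_in_labelled_extension_iff[OF \<omega>\<^sub>0(1)])
    finally show ?thesis .
  qed
  have label_total: "\<exists>y\<in>D. (f i, [x, y]) \<in> ?\<omega>" if "i \<in> {1..k}" "x \<in> D" for i x
    using successors_labelled_extension[OF \<omega>\<^sub>0 \<psi> that(2,1)]
    by (auto simp: successors_def)
  have labels_disjoint: "(f i, [x, y]) \<notin> ?\<omega> \<or> (f j, [x, y]) \<notin> ?\<omega>"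
    if "i \<in> {1..k}" "j \<in> {1..k}" "i \<noteq> j" "x \<in> D" for i j x y
  proof (rule ccontr)
    assume "\<not> ?thesis"
    then have "\<psi> x ! (i - 1) = \<psi> x ! (j - 1)"
      using that(1,2) by (clarsimp simp: label_atom_in_labelled_extension_iff[OF \<omega>\<^sub>0(1)])
    moreover have "i - 1 < length (\<psi> x)" "j - 1 < length (\<psi> x)"
      using that(1,2) \<psi>x(3)[OF that(4)] by auto
    ultimately have "i - 1 = j - 1"
      using \<psi>x(2)[OF that(4)] nth_eq_iff_index_eq by blast
    with that(1-3) show False
      by auto
  qed
  show ?thesis
    unfolding Phi_def by (intro conjI ballI impI N_R R_iff_label label_total labels_disjoint)
qed

lemma labelling_labelled_extension:
  assumes \<omega>\<^sub>0: "\<omega>\<^sub>0 \<in> worlds L ar D" "exactly_k R k D \<omega>\<^sub>0"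
    and \<psi>: "\<psi> \<in> (\<Pi>\<^sub>E x\<in>D. permutations_of_set (successors R D \<omega>\<^sub>0 x))"
  shows "labelling f k D (labelled_extension f k D \<omega>\<^sub>0 \<psi>) = \<psi>"
proof
  fix x
  show "labelling f k D (labelled_extension f k D \<omega>\<^sub>0 \<psi>) x = \<psi> x"
  proof (cases "x \<in> D")
    case True
    note label_successors = successors_labelled_extension[OF \<omega>\<^sub>0 \<psi> True]
    have "labelling f k D (labelled_extension f k D \<omega>\<^sub>0 \<psi>) x = map (\<lambda>i. \<psi> x ! (i - 1)) [1..<Suc k]"
      unfolding labelling_def using True
      by (simp add: label_successors cong: map_cong del: upt_Suc)
    then show ?thesis
      using permutations_of_successorsD(3)[OF \<omega>\<^sub>0(2) \<psi> True] map_nth_pred_upt[of "\<psi> x"]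
      by simp
  next
    case False
    then show ?thesis
      by (simp add: labelling_def PiE_arb[OF \<psi> False])
  qed
qed

lemma labelling_nth_successors:
  assumes "\<omega> \<in> worlds (L \<union> f ` {1..k}) ar D" "Phi R f k D \<omega>" "x \<in> D" "i \<in> {1..k}"
  shows "successors (f i) D \<omega> x = {labelling f k D \<omega> x ! (i - 1)}"
proof -
  have "card (successors (f i) D \<omega> x) = 1"
    using Phi_card_label_successors[OF finite_D ar_R assms] .
  moreover have "labelling f k D \<omega> x ! (i - 1) = the_elem (successors (f i) D \<omega> x)"
    using assms(3,4) by (auto simp: labelling_def simp del: upt_Suc)
  ultimately show ?thesis
    by (metis is_singleton_altdef is_singleton_the_elem)
qed

lemma label_atom_in_worldsE:
  assumes "\<omega> \<in> worlds (L \<union> f ` {1..k}) ar D" "(P, xs) \<in> \<omega>" "P \<notin> L"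
  obtains i x y where "i \<in> {1..k}" "P = f i" "xs = [x, y]" "x \<in> D" "y \<in> D"
proof -
  obtain i where i: "i \<in> {1..k}" "P = f i" and "length xs = ar P" "set xs \<subseteq> D"
    using worlds_memD[OF assms(1,2)] assms(3) by blast
  moreover obtain x y where "xs = [x, y]"
    using i f_fresh \<open>length xs = ar P\<close> by (auto simp: length_eq_2_iff)
  ultimately show ?thesis
    using that by simp
qed

lemma labelled_extension_labelling:
  assumes \<omega>: "\<omega> \<in> worlds (L \<union> f ` {1..k}) ar D" "Phi R f k D \<omega>"
  shows "labelled_extension f k D (restrict_world L \<omega>) (labelling f k D \<omega>) = \<omega>"
proof (intro set_eqI iffI)
  fix a assume "a \<in> \<omega>"
  obtain P xs where a: "a = (P, xs)"
    by fastforce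
  show "a \<in> labelled_extension f k D (restrict_world L \<omega>) (labelling f k D \<omega>)"
  proof (cases "P \<in> L")
    case True
    then show ?thesis
      using \<open>a \<in> \<omega>\<close> a by (simp add: labelled_extension_def restrict_world_def)
  next
    case False
    with \<omega>(1) \<open>a \<in> \<omega>\<close>[unfolded a] obtain i x y
      where i: "i \<in> {1..k}" "P = f i" and "xs = [x, y]" "x \<in> D" "y \<in> D"
      by (rule label_atom_in_worldsE)
    have "(f i, [x, y]) \<in> \<omega>"
      using \<open>a \<in> \<omega>\<close> a i(2) \<open>xs = [x, y]\<close> by simp
    then have "y \<in> successors (f i) D \<omega> x"
      using \<open>y \<in> D\<close> by (simp add: successors_def)
    then show ?thesis
      using labelling_nth_successors[OF \<omega> \<open>x \<in> D\<close> i(1)] a i \<open>xs = [x, y]\<close> \<open>x \<in> D\<close>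
      by (auto simp: labelled_extension_def)
  qed
next
  fix a assume "a \<in> labelled_extension f k D (restrict_world L \<omega>) (labelling f k D \<omega>)"
  then consider "a \<in> restrict_world L \<omega>"
    | x i where "a = (f i, [x, labelling f k D \<omega> x ! (i - 1)])" "x \<in> D" "i \<in> {1..k}"
    by (auto simp: labelled_extension_def)
  then show "a \<in> \<omega>"
  proof cases
    case 1
    then show ?thesis
      by (simp add: restrict_world_def)
  next
    case 2
    then show ?thesis
      using labelling_nth_successors[OF \<omega> 2(2,3)] by (auto simp: successors_def)
  qed
qed

lemma labelling_in_permutations_of_successors:
  assumes \<omega>: "\<omega> \<in> worlds (L \<union> f ` {1..k}) ar D" "Phi R f k D \<omega>"
  shows "labelling f k D \<omega> \<in> (\<Pi>\<^sub>E x\<in>D. permutations_of_set (successors R D (restrict_world L \<omega>) x))"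
proof (rule PiE_I)
  fix x assume "x \<in> D"
  let ?xs = "labelling f k D \<omega> x"
  have "length ?xs = k"
    using \<open>x \<in> D\<close> by (simp add: labelling_def)
  have "set ?xs = (\<Union>i\<in>{1..k}. successors (f i) D \<omega> x)"
    using set_eq_image_nth_pred[of ?xs] labelling_nth_successors[OF \<omega> \<open>x \<in> D\<close>] \<open>length ?xs = k\<close>
    by auto
  also have "\<dots> = successors R D (restrict_world L \<omega>) x"
    using Phi_successors_eq_UN[OF \<omega>(2) \<open>x \<in> D\<close>] by (simp add: successors_restrict_world R_in_L)
  finally have "set ?xs = successors R D (restrict_world L \<omega>) x" .
  moreover have "card (successors R D \<omega> x) = k"
    using Phi_imp_exactly_k[OF finite_D ar_R \<omega>] \<open>x \<in> D\<close>
    by (simp add: exactly_k_iff_card_successors)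
  ultimately show "?xs \<in> permutations_of_set (successors R D (restrict_world L \<omega>) x)"
    using \<open>length ?xs = k\<close>
    by (simp add: permutations_of_set_def successors_restrict_world R_in_L card_distinct)
qed (simp add: labelling_def)

lemma card_Phi_fibre:
  assumes \<omega>\<^sub>0: "\<omega>\<^sub>0 \<in> worlds L ar D" "exactly_k R k D \<omega>\<^sub>0"
  shows "card {\<omega> \<in> worlds (L \<union> f ` {1..k}) ar D. Phi R f k D \<omega> \<and> restrict_world L \<omega> = \<omega>\<^sub>0}
    = fact k ^ card D"
proof -
  let ?\<Psi> = "\<Pi>\<^sub>E x\<in>D. permutations_of_set (successors R D \<omega>\<^sub>0 x)"
  let ?F = "{\<omega> \<in> worlds (L \<union> f ` {1..k}) ar D. Phi R f k D \<omega> \<and> restrict_world L \<omega> = \<omega>\<^sub>0}"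
  have "bij_betw (labelled_extension f k D \<omega>\<^sub>0) ?\<Psi> ?F"
  proof (rule bij_betw_byWitness[where f' = "labelling f k D"])
    show "\<forall>\<psi>\<in>?\<Psi>. labelling f k D (labelled_extension f k D \<omega>\<^sub>0 \<psi>) = \<psi>"
      using labelling_labelled_extension[OF \<omega>\<^sub>0] by blast
    show "\<forall>\<omega>\<in>?F. labelled_extension f k D \<omega>\<^sub>0 (labelling f k D \<omega>) = \<omega>"
      using labelled_extension_labelling by blast
    show "labelled_extension f k D \<omega>\<^sub>0 ` ?\<Psi> \<subseteq> ?F"
      using labelled_extension_in_worlds[OF \<omega>\<^sub>0] labelled_extension_Phi[OF \<omega>\<^sub>0]
        restrict_labelled_extension[OF \<omega>\<^sub>0(1)]
      by blast
    show "labelling f k D ` ?F \<subseteq> ?\<Psi>"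
      using labelling_in_permutations_of_successors by blast
  qed
  then have "card ?F = card ?\<Psi>"
    by (simp add: bij_betw_same_card)
  also have "\<dots> = (\<Prod>x\<in>D. fact k)"
    using finite_D \<omega>\<^sub>0(2)
    by (simp add: card_PiE card_permutations_of_set exactly_k_iff_card_successors successors_def)
  finally show ?thesis
    by simp
qed

end

theorem lemma2:
  fixes D :: "'d set" and L :: "'p set" and ar :: "'p \<Rightarrow> nat"
    and R :: 'p and k :: nat and \<Gamma> :: "'p fm" and f :: "nat \<Rightarrow> 'p"
    and w wb :: "'p \<Rightarrow> real"
  assumes "finite D" and "finite L"
    and "R \<in> L" and "ar R = 2"
    and "k \<ge> 1"
    and "fo_sentence L ar \<Gamma>"
    and "inj_on f {1..k}"
    and "\<forall>i\<in>{1..k}. f i \<notin> L \<and> ar (f i) = 2"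
    and "\<forall>i\<in>{1..k}. w (f i) = 1 \<and> wb (f i) = 1"
  shows "WFOMC (\<lambda>\<omega>. models D \<omega> \<Gamma> \<and> exactly_k R k D \<omega>) w wb L ar D
       = 1 / (fact k) ^ card D
         * WFOMC (\<lambda>\<omega>. models D \<omega> \<Gamma> \<and> Phi R f k D \<omega>) w wb (L \<union> f ` {1..k}) ar D"
proof -
  let ?F = "f ` {1..k}"
  have "WFOMC (\<lambda>\<omega>. models D \<omega> \<Gamma> \<and> Phi R f k D \<omega>) w wb (L \<union> ?F) ar D
      = real (fact k ^ card D) * WFOMC (\<lambda>\<omega>. models D \<omega> \<Gamma> \<and> exactly_k R k D \<omega>) w wb L ar D"
  proof (rule WFOMC_extension_uniform_fibres)
    show "finite D" "finite L" "finite ?F"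
      using assms(1,2) by simp_all
    show "L \<inter> ?F = {}" "\<forall>P\<in>?F. w P = 1 \<and> wb P = 1"
      using assms(8,9) by auto
  next
    fix \<omega> assume \<omega>: "\<omega> \<in> worlds (L \<union> ?F) ar D" "models D \<omega> \<Gamma> \<and> Phi R f k D \<omega>"
    then have "exactly_k R k D \<omega>"
      using Phi_imp_exactly_k[where ar = ar and R = R] assms(1,4) by blast
    with \<omega> show "models D (restrict_world L \<omega>) \<Gamma> \<and> exactly_k R k D (restrict_world L \<omega>)"
      by (simp add: models_restrict_world[OF assms(6)] exactly_k_restrict_world[OF assms(3)])
  next
    fix \<omega>\<^sub>0 assume \<omega>\<^sub>0: "\<omega>\<^sub>0 \<in> worlds L ar D" "models D \<omega>\<^sub>0 \<Gamma> \<and> exactly_k R k D \<omega>\<^sub>0"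
    then have "{\<omega> \<in> worlds (L \<union> ?F) ar D. (models D \<omega> \<Gamma> \<and> Phi R f k D \<omega>) \<and> restrict_world L \<omega> = \<omega>\<^sub>0}
        = {\<omega> \<in> worlds (L \<union> ?F) ar D. Phi R f k D \<omega> \<and> restrict_world L \<omega> = \<omega>\<^sub>0}"
      using models_restrict_world[OF assms(6)] by blast
    then show "card {\<omega> \<in> worlds (L \<union> ?F) ar D.
        (models D \<omega> \<Gamma> \<and> Phi R f k D \<omega>) \<and> restrict_world L \<omega> = \<omega>\<^sub>0} = fact k ^ card D"
      using card_Phi_fibre[OF assms(1,3,4,7,8) \<omega>\<^sub>0(1)] \<omega>\<^sub>0(2) by simp
  qed
  then show ?thesis
    by simp
qed

end
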